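(* Let $G$ be a finite group, $k\ge 1$ an integer, and $A_1,\ldots,A_k\subseteq G$ nonempty subsets such that the multiplication map $A_1\times\cdots\times A_k\to G$, $(a_1,\ldots,a_k)\mapsto a_1\cdots a_k$, is a bijection. For a subset $A\subseteq G$ write $A^{-1}A=\{g^{-1}h: g,h\in A\}$ and $AA^{-1}=\{gh^{-1}: g,h\in A\}$. Then: (i) $\mathrm{card}(A_1)$ divides the order of the subgroup of $G$ generated by $A_1^{-1}A_1$; this subgroup equals the subgroup generated by $g^{-1}A_1$ for any $g\in A_1$. Moreover, the order of this subgroup equals the order of the subgroup generated by $A_1A_1^{-1}$, which equals the subgroup generated by $A_1g^{-1}$ for any $g\in A_1$. (ii) $\mathrm{card}(A_k)$ divides the order of the subgroup of $G$ generated by $A_kA_k^{-1}$; this subgroup equals the subgroup generated by $A_kg^{-1}$ for any $g\in A_k$. Moreover, the order of this subgroup equals the order of the subgroup generated by $A_k^{-1}A_k$, which equals the subgroup generated by $g^{-1}A_k$ for any $g\in A_k$. (iii) For each $i$ with $1<i<k$, $\mathrm{card}(A_i)$ divides the order of the normal subgroup of $G$ generated by $A_i^{-1}A_i$; this normal subgroup equals the normal subgroup generated by $g^{-1}A_i$ for any $g\in A_i$, and also equals the normal subgroup generated by $A_iA_i^{-1}$, and the normal subgroup generated by $A_ig^{-1}$ for any $g\in A_i$. *)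

theory Defs
  imports "HOL-Algebra.Algebra"
begin

fun prod_seq :: "('a, 'b) monoid_scheme \<Rightarrow> (nat \<Rightarrow> 'a) \<Rightarrow> nat \<Rightarrow> 'a" where
  "prod_seq G a 0 = \<one>\<^bsub>G\<^esub>"
| "prod_seq G a (Suc n) = prod_seq G a n \<otimes>\<^bsub>G\<^esub> a (Suc n)"

definition normal_closure :: "('a, 'b) monoid_scheme \<Rightarrow> 'a set \<Rightarrow> 'a set" where
  "normal_closure G S = \<Inter> {N. N \<lhd> G \<and> S \<subseteq> N}"

end

theory Submission
  imports Defs
begin

text \<open>Through the bijection \<open>A\<^sub>1 \<times> \<cdots> \<times> A\<^sub>k \<rightarrow> G\<close>, \<open>|A\<^sub>i|\<close> divides \<open>|T|\<close> for every
  \<open>T \<subseteq> G\<close> whose membership test \<open>a\<^sub>1 \<cdots> a\<^sub>k \<in> T\<close> does not depend on \<open>a\<^sub>i\<close>: the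
  preimage of \<open>T\<close> is then a union of fibres of the projection forgetting the \<open>i\<close>-th
  coordinate, each of size \<open>|A\<^sub>i|\<close>. If \<open>A\<^sub>1\<^sup>-\<^sup>1A\<^sub>1 \<subseteq> H\<close>, then \<open>A\<^sub>1\<close> lies in one left
  coset \<open>gH\<close>, so \<open>a\<^sub>1 Q \<in> gH\<close> iff \<open>Q \<in> H\<close> and \<open>T = gH\<close> qualifies for \<open>i = 1\<close>;
  symmetrically a right coset of \<open>H \<supseteq> A\<^sub>kA\<^sub>k\<^sup>-\<^sup>1\<close> qualifies for \<open>i = k\<close>. For inner \<open>i\<close>
  only normal subgroups \<open>N \<supseteq> A\<^sub>i\<^sup>-\<^sup>1A\<^sub>i\<close> work, because all of \<open>A\<^sub>i\<close> has a single image
  in \<open>G/N\<close>. The generating sets \<open>g\<^sup>-\<^sup>1A\<close> and \<open>Ag\<^sup>-\<^sup>1\<close> are conjugate by \<open>g\<close>, which gives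
  the equality of orders.\<close>

lemma card_dvd_card_if_upd_closed:
  assumes S: "S \<subseteq> PiE I A" and i: "i \<in> I" and c0: "c0 \<in> A i"
    and upd: "\<And>a c. a \<in> S \<Longrightarrow> c \<in> A i \<Longrightarrow> a(i := c) \<in> S"
  shows "card (A i) dvd card S"
proof -
  have "bij_betw (\<lambda>a. (a i, a(i := c0))) S (A i \<times> {a \<in> S. a i = c0})"
  proof (rule bij_betwI[where g = "\<lambda>(c, a). a(i := c)"])
    show "(\<lambda>a. (a i, a(i := c0))) \<in> S \<rightarrow> A i \<times> {a \<in> S. a i = c0}"
      using S i c0 upd by (auto simp: PiE_iff)
    show "(\<lambda>(c, a). a(i := c)) \<in> A i \<times> {a \<in> S. a i = c0} \<rightarrow> S"
      using upd by auto
  qed auto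
  then have "card S = card (A i) * card {a \<in> S. a i = c0}"
    by (simp add: bij_betw_same_card card_cartesian_product)
  then show ?thesis by simp
qed

context monoid begin

lemma prod_seq_closed:
  "(\<And>j. j \<in> {1..n} \<Longrightarrow> a j \<in> carrier G) \<Longrightarrow> prod_seq G a n \<in> carrier G"
  by (induct n) auto

lemma prod_seq_cong:
  "(\<And>j. j \<in> {1..n} \<Longrightarrow> a j = b j) \<Longrightarrow> prod_seq G a n = prod_seq G b n"
  by (induct n) auto

lemma prod_seq_add:
  assumes "\<And>j. j \<in> {1..m + n} \<Longrightarrow> a j \<in> carrier G"
  shows "prod_seq G a (m + n) = prod_seq G a m \<otimes> prod_seq G (\<lambda>j. a (j + m)) n"
  using assms
proof (induct n)
  case 0
  have "prod_seq G a m \<in> carrier G" by (rule prod_seq_closed) (use 0 in auto)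
  then show ?case by simp
next
  case (Suc n)
  have "prod_seq G a m \<in> carrier G" "prod_seq G (\<lambda>j. a (j + m)) n \<in> carrier G"
    by (rule prod_seq_closed, use Suc.prems in auto)+
  with Suc show ?case by (simp add: m_assoc add.commute)
qed

lemma prod_seq_split_at:
  assumes i: "i \<in> {1..k}" and a: "\<And>j. j \<in> {1..k} \<Longrightarrow> a j \<in> carrier G"
  shows "prod_seq G a k = prod_seq G a (i - 1) \<otimes> a i \<otimes> prod_seq G (\<lambda>j. a (j + i)) (k - i)"
proof -
  have "prod_seq G a k = prod_seq G a (i + (k - i))" using i by simp
  also have "\<dots> = prod_seq G a i \<otimes> prod_seq G (\<lambda>j. a (j + i)) (k - i)"
    using i a by (intro prod_seq_add) auto
  also have "prod_seq G a i = prod_seq G a (i - 1) \<otimes> a i"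
    using i by (cases i) auto
  finally show ?thesis .
qed

lemma prod_seq_fun_upd_split:
  assumes i: "i \<in> {1..k}" and a: "\<And>j. j \<in> {1..k} \<Longrightarrow> a j \<in> carrier G"
    and c: "c \<in> carrier G"
  obtains P Q where "P \<in> carrier G" "Q \<in> carrier G" "i = 1 \<Longrightarrow> P = \<one>" "i = k \<Longrightarrow> Q = \<one>"
    "prod_seq G a k = P \<otimes> a i \<otimes> Q" "prod_seq G (a(i := c)) k = P \<otimes> c \<otimes> Q"
proof
  let ?P = "prod_seq G a (i - 1)" and ?Q = "prod_seq G (\<lambda>j. a (j + i)) (k - i)"
  show "?P \<in> carrier G" "?Q \<in> carrier G" "i = 1 \<Longrightarrow> ?P = \<one>" "i = k \<Longrightarrow> ?Q = \<one>"
    by (intro prod_seq_closed a, use i in auto)+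
  show "prod_seq G a k = ?P \<otimes> a i \<otimes> ?Q"
    using i a by (rule prod_seq_split_at)
  have "prod_seq G (a(i := c)) k = prod_seq G (a(i := c)) (i - 1) \<otimes> (a(i := c)) i \<otimes>
      prod_seq G (\<lambda>j. (a(i := c)) (j + i)) (k - i)"
    using i by (rule prod_seq_split_at) (use a c in auto)
  also have "prod_seq G (a(i := c)) (i - 1) = ?P" by (rule prod_seq_cong) auto
  also have "prod_seq G (\<lambda>j. (a(i := c)) (j + i)) (k - i) = ?Q" by (rule prod_seq_cong) auto
  also have "(a(i := c)) i = c" by simp
  finally show "prod_seq G (a(i := c)) k = ?P \<otimes> c \<otimes> ?Q" .
qed

end

lemma normal_closure_incl: "S \<subseteq> normal_closure G S"
  by (auto simp: normal_closure_def)

lemma normal_closure_eqI: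
  "(\<And>N. N \<lhd> G \<Longrightarrow> S \<subseteq> N \<longleftrightarrow> S' \<subseteq> N) \<Longrightarrow> normal_closure G S = normal_closure G S'"
  unfolding normal_closure_def by metis

context group begin

lemma mult_inv_cancel_left [simp]:
  "x \<in> carrier G \<Longrightarrow> y \<in> carrier G \<Longrightarrow> x \<otimes> (inv x \<otimes> y) = y"
  by (simp add: m_assoc[symmetric])

lemma inv_mult_cancel_left [simp]:
  "x \<in> carrier G \<Longrightarrow> y \<in> carrier G \<Longrightarrow> inv x \<otimes> (x \<otimes> y) = y"
  by (simp add: m_assoc[symmetric])

lemma set_inv_mult_iff: "x \<in> set_inv A <#> A \<longleftrightarrow> (\<exists>a\<in>A. \<exists>b\<in>A. x = inv a \<otimes> b)"
  by (auto simp: set_mult_def SET_INV_def)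

lemma mult_set_inv_iff: "x \<in> A <#> set_inv A \<longleftrightarrow> (\<exists>a\<in>A. \<exists>b\<in>A. x = a \<otimes> inv b)"
  by (auto simp: set_mult_def SET_INV_def)

lemma set_inv_subset_carrier: "A \<subseteq> carrier G \<Longrightarrow> set_inv A \<subseteq> carrier G"
  by (auto simp: SET_INV_def)

lemma card_l_coset: "H \<subseteq> carrier G \<Longrightarrow> x \<in> carrier G \<Longrightarrow> card (x <# H) = card H"
  unfolding l_coset_def UNION_singleton_eq_range by (simp add: card_image inj_on_g')

lemma generate_eqI:
  assumes "S \<subseteq> carrier G" "S' \<subseteq> carrier G" and "\<And>H. subgroup H G \<Longrightarrow> S \<subseteq> H \<longleftrightarrow> S' \<subseteq> H"
  shows "generate G S = generate G S'"
  using assms generate_minimal[OF assms(1)] generate_minimal[OF assms(2)] by auto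

lemma generate_conjugate:
  assumes g: "g \<in> carrier G" and K: "K \<subseteq> carrier G"
  shows "generate G ((\<lambda>x. g \<otimes> x \<otimes> inv g) ` K) = (\<lambda>x. g \<otimes> x \<otimes> inv g) ` generate G K"
proof -
  interpret conj: group_hom G G "\<lambda>x. g \<otimes> x \<otimes> inv g"
    by (intro group_hom.intro group_hom_axioms.intro is_group homI) (use g in \<open>auto simp: m_assoc\<close>)
  show ?thesis using K by (rule conj.generate_img)
qed

lemma card_generate_conjugate:
  assumes g: "g \<in> carrier G" and K: "K \<subseteq> carrier G"
  shows "card (generate G ((\<lambda>x. g \<otimes> x \<otimes> inv g) ` K)) = card (generate G K)"
proof -
  have "inj_on (\<lambda>x. g \<otimes> x \<otimes> inv g) (generate G K)"
    using generate_incl[OF K] g by (intro inj_onI) (auto dest: conjugation_is_inj)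
  then show ?thesis by (simp add: generate_conjugate[OF assms] card_image)
qed

lemma set_inv_mult_subset_iff:
  assumes H: "subgroup H G" and A: "A \<subseteq> carrier G" and g: "g \<in> A"
  shows "set_inv A <#> A \<subseteq> H \<longleftrightarrow> inv g <# A \<subseteq> H"
proof
  assume "set_inv A <#> A \<subseteq> H"
  then show "inv g <# A \<subseteq> H" using g unfolding subset_iff set_inv_mult_iff l_coset_def by blast
next
  assume sub: "inv g <# A \<subseteq> H"
  show "set_inv A <#> A \<subseteq> H"
  proof
    fix x assume "x \<in> set_inv A <#> A"
    then obtain a b where ab: "a \<in> A" "b \<in> A" and x: "x = inv a \<otimes> b"
      by (auto simp: set_inv_mult_iff)
    have "inv g \<otimes> a \<in> H" "inv g \<otimes> b \<in> H" using sub ab by (auto simp: l_coset_def)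
    then have "inv (inv g \<otimes> a) \<otimes> (inv g \<otimes> b) \<in> H"
      using H by (simp add: subgroup.m_closed subgroup.m_inv_closed)
    moreover have "a \<in> carrier G" "b \<in> carrier G" "g \<in> carrier G" using A ab g by auto
    ultimately show "x \<in> H" using x by (simp add: inv_mult_group m_assoc)
  qed
qed

lemma mult_set_inv_subset_iff:
  assumes H: "subgroup H G" and A: "A \<subseteq> carrier G" and g: "g \<in> A"
  shows "A <#> set_inv A \<subseteq> H \<longleftrightarrow> A #> inv g \<subseteq> H"
proof
  assume "A <#> set_inv A \<subseteq> H"
  then show "A #> inv g \<subseteq> H" using g unfolding subset_iff mult_set_inv_iff r_coset_def by blast
next
  assume sub: "A #> inv g \<subseteq> H"
  show "A <#> set_inv A \<subseteq> H"
  proof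
    fix x assume "x \<in> A <#> set_inv A"
    then obtain a b where ab: "a \<in> A" "b \<in> A" and x: "x = a \<otimes> inv b"
      by (auto simp: mult_set_inv_iff)
    have "a \<otimes> inv g \<in> H" "b \<otimes> inv g \<in> H" using sub ab by (auto simp: r_coset_def)
    then have "(a \<otimes> inv g) \<otimes> inv (b \<otimes> inv g) \<in> H"
      using H by (simp add: subgroup.m_closed subgroup.m_inv_closed)
    moreover have "a \<in> carrier G" "b \<in> carrier G" "g \<in> carrier G" using A ab g by auto
    ultimately show "x \<in> H" using x by (simp add: inv_mult_group m_assoc)
  qed
qed

lemma l_coset_subset_normal_iff:
  assumes N: "N \<lhd> G" and A: "A \<subseteq> carrier G" and x: "x \<in> carrier G"
  shows "x <# A \<subseteq> N \<longleftrightarrow> A #> x \<subseteq> N"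
proof -
  have "x \<otimes> a \<in> N \<longleftrightarrow> a \<otimes> x \<in> N" if a: "a \<in> A" for a
  proof -
    have a_carrier: "a \<in> carrier G" using a A by auto
    have "inv x \<otimes> (x \<otimes> a) \<otimes> x = a \<otimes> x" "x \<otimes> (a \<otimes> x) \<otimes> inv x = x \<otimes> a"
      using a_carrier x by (simp_all add: m_assoc)
    then show ?thesis using normal.inv_op_closed1[OF N x] normal.inv_op_closed2[OF N x] by metis
  qed
  then show ?thesis by (auto simp: l_coset_def r_coset_def)
qed

lemma generate_set_inv_mult_eq_l_coset:
  assumes "A \<subseteq> carrier G" "g \<in> A"
  shows "generate G (set_inv A <#> A) = generate G (inv g <# A)"
  using assms by (intro generate_eqI set_inv_mult_subset_iff set_mult_closed set_inv_subset_carrier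
      l_coset_subset_G) auto

lemma generate_mult_set_inv_eq_r_coset:
  assumes "A \<subseteq> carrier G" "g \<in> A"
  shows "generate G (A <#> set_inv A) = generate G (A #> inv g)"
  using assms by (intro generate_eqI mult_set_inv_subset_iff set_mult_closed set_inv_subset_carrier
      r_coset_subset_G) auto

lemma card_generate_set_inv_mult:
  assumes A: "A \<subseteq> carrier G" and ne: "A \<noteq> {}"
  shows "card (generate G (set_inv A <#> A)) = card (generate G (A <#> set_inv A))"
proof -
  obtain g where g: "g \<in> A" using ne by blast
  then have g_carrier: "g \<in> carrier G" using A by auto
  have "(\<lambda>x. g \<otimes> x \<otimes> inv g) ` (inv g <# A) = A #> inv g"
    unfolding l_coset_def r_coset_def UNION_singleton_eq_range image_image
    using A g_carrier by (intro image_cong) (auto simp: m_assoc)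
  then have "card (generate G (A #> inv g)) = card (generate G (inv g <# A))"
    using card_generate_conjugate[OF g_carrier l_coset_subset_G[OF A inv_closed[OF g_carrier]]]
    by simp
  then show ?thesis
    using generate_set_inv_mult_eq_l_coset[OF A g] generate_mult_set_inv_eq_r_coset[OF A g] by simp
qed

lemma normal_closure_normal:
  assumes "S \<subseteq> carrier G" shows "normal_closure G S \<lhd> G"
proof -
  have "carrier G \<in> {N. N \<lhd> G \<and> S \<subseteq> N}" using assms normal_self by auto
  then have "subgroup (normal_closure G S) G"
    unfolding normal_closure_def by (intro subgroups_Inter) (auto dest: normal_imp_subgroup)
  moreover have "x \<otimes> h \<otimes> inv x \<in> normal_closure G S"
    if "x \<in> carrier G" "h \<in> normal_closure G S" for x h
    using that by (auto simp: normal_closure_def normal_inv_iff)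
  ultimately show ?thesis by (simp add: normal_inv_iff)
qed

lemma normal_closure_set_inv_mult_eq_l_coset:
  assumes "A \<subseteq> carrier G" "g \<in> A"
  shows "normal_closure G (set_inv A <#> A) = normal_closure G (inv g <# A)"
  using assms by (intro normal_closure_eqI set_inv_mult_subset_iff normal_imp_subgroup)

lemma normal_closure_set_inv_mult_eq_r_coset:
  assumes A: "A \<subseteq> carrier G" and g: "g \<in> A"
  shows "normal_closure G (set_inv A <#> A) = normal_closure G (A #> inv g)"
proof (rule normal_closure_eqI)
  fix N assume N: "N \<lhd> G"
  have "inv g \<in> carrier G" using A g by auto
  then show "set_inv A <#> A \<subseteq> N \<longleftrightarrow> A #> inv g \<subseteq> N"
    using set_inv_mult_subset_iff[OF normal_imp_subgroup[OF N] A g]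
      l_coset_subset_normal_iff[OF N A] by simp
qed

lemma normal_closure_set_inv_mult_eq_mult_set_inv:
  assumes A: "A \<subseteq> carrier G" and ne: "A \<noteq> {}"
  shows "normal_closure G (set_inv A <#> A) = normal_closure G (A <#> set_inv A)"
proof (rule normal_closure_eqI)
  fix N assume N: "N \<lhd> G"
  obtain g where g: "g \<in> A" using ne by blast
  then have "inv g \<in> carrier G" using A by auto
  then show "set_inv A <#> A \<subseteq> N \<longleftrightarrow> A <#> set_inv A \<subseteq> N"
    using set_inv_mult_subset_iff[OF normal_imp_subgroup[OF N] A g]
      mult_set_inv_subset_iff[OF normal_imp_subgroup[OF N] A g]
      l_coset_subset_normal_iff[OF N A] by simp
qed

end

locale group_factorization = group G for G (structure) +
  fixes k :: nat and A :: "nat \<Rightarrow> 'a set"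
  assumes factor_subset: "i \<in> {1..k} \<Longrightarrow> A i \<subseteq> carrier G"
    and bij_prod_seq: "bij_betw (\<lambda>a. prod_seq G a k) (PiE {1..k} A) (carrier G)"
begin

lemma factor_nonempty:
  assumes "i \<in> {1..k}" shows "A i \<noteq> {}"
proof -
  have "PiE {1..k} A \<noteq> {}"
    using bij_prod_seq one_closed by (auto simp: bij_betw_def)
  then show ?thesis using assms by (auto simp: PiE_eq_empty_iff)
qed

lemma card_factor_dvd_card:
  assumes i: "i \<in> {1..k}" and T: "T \<subseteq> carrier G"
    \<comment> \<open>\<open>P\<close> and \<open>Q\<close> stand for the products of the factors before and after position \<open>i\<close>.\<close>
    and closed: "\<And>P Q a c. P \<in> carrier G \<Longrightarrow> Q \<in> carrier G \<Longrightarrow> (i = 1 \<Longrightarrow> P = \<one>) \<Longrightarrow>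
      (i = k \<Longrightarrow> Q = \<one>) \<Longrightarrow> a \<in> A i \<Longrightarrow> c \<in> A i \<Longrightarrow> P \<otimes> a \<otimes> Q \<in> T \<Longrightarrow> P \<otimes> c \<otimes> Q \<in> T"
  shows "card (A i) dvd card T"
proof -
  define S where "S = {a \<in> PiE {1..k} A. prod_seq G a k \<in> T}"
  have "bij_betw (\<lambda>a. prod_seq G a k) S T"
    unfolding S_def by (rule bij_betw_subset[OF bij_prod_seq])
      (use T bij_prod_seq in \<open>auto simp: bij_betw_def\<close>)
  then have card_S: "card S = card T" by (rule bij_betw_same_card)
  have "a(i := c) \<in> S" if a: "a \<in> S" and c: "c \<in> A i" for a c
  proof -
    have a_i: "a i \<in> A i" using a i by (auto simp: S_def PiE_iff)
    have a_carrier: "a j \<in> carrier G" if "j \<in> {1..k}" for j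
      using a factor_subset[OF that] that by (auto simp: S_def PiE_iff)
    have c_carrier: "c \<in> carrier G" using c factor_subset[OF i] by blast
    obtain P Q where PQ: "P \<in> carrier G" "Q \<in> carrier G" "i = 1 \<Longrightarrow> P = \<one>" "i = k \<Longrightarrow> Q = \<one>"
      and split: "prod_seq G a k = P \<otimes> a i \<otimes> Q" "prod_seq G (a(i := c)) k = P \<otimes> c \<otimes> Q"
      using prod_seq_fun_upd_split[where a = a, OF i a_carrier c_carrier] by blast
    have "P \<otimes> a i \<otimes> Q \<in> T" using a split(1) by (simp add: S_def)
    then have "prod_seq G (a(i := c)) k \<in> T"
      unfolding split(2) using closed[OF PQ(1,2) _ _ a_i c] PQ(3,4) by blast
    moreover have "a(i := c) \<in> PiE (insert i {1..k}) A"
      using a c by (intro PiE_fun_upd) (auto simp: S_def)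
    ultimately show ?thesis using i by (simp add: S_def insert_absorb)
  qed
  moreover obtain c0 where "c0 \<in> A i" using factor_nonempty[OF i] by blast
  ultimately have "card (A i) dvd card S"
    using i by (intro card_dvd_card_if_upd_closed[where I = "{1..k}"]) (auto simp: S_def)
  with card_S show ?thesis by simp
qed

lemma card_first_factor_dvd_subgroup:
  assumes k: "k \<ge> 1" and H: "subgroup H G" and sub: "set_inv (A 1) <#> A 1 \<subseteq> H"
  shows "card (A 1) dvd card H"
proof -
  have i: "1 \<in> {1..k}" using k by simp
  obtain g where g: "g \<in> A 1" using factor_nonempty[OF i] by blast
  have A1: "A 1 \<subseteq> carrier G" by (rule factor_subset[OF i])
  have g_carrier: "g \<in> carrier G" using g A1 by auto
  have "card (A 1) dvd card (g <# H)"
  proof (rule card_factor_dvd_card[OF i])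
    show "g <# H \<subseteq> carrier G" using H g_carrier by (simp add: l_coset_subset_G subgroup.subset)
    fix P Q a c assume P: "P \<in> carrier G" "1 = 1 \<Longrightarrow> P = \<one>" and Q: "Q \<in> carrier G"
      and a: "a \<in> A 1" and c: "c \<in> A 1" and aQ: "P \<otimes> a \<otimes> Q \<in> g <# H"
    have carrier: "a \<in> carrier G" "c \<in> carrier G" using a c A1 by auto
    have "inv g \<otimes> (a \<otimes> Q) \<in> H"
      using subgroup.lcos_module_imp[OF H is_group g_carrier] aQ P carrier Q by simp
    moreover have "inv g \<otimes> c \<in> H" "inv a \<otimes> g \<in> H"
      using sub g a c unfolding subset_iff set_inv_mult_iff by blast+
    ultimately have "(inv g \<otimes> c) \<otimes> (inv a \<otimes> g) \<otimes> (inv g \<otimes> (a \<otimes> Q)) \<in> H"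
      using H by (simp add: subgroup.m_closed)
    then have "inv g \<otimes> (P \<otimes> c \<otimes> Q) \<in> H" using P carrier Q g_carrier by (simp add: m_assoc)
    then show "P \<otimes> c \<otimes> Q \<in> g <# H"
      using subgroup.lcos_module_rev[OF H is_group g_carrier] P carrier Q by simp
  qed
  then show ?thesis using card_l_coset[OF subgroup.subset[OF H] g_carrier] by simp
qed

lemma card_last_factor_dvd_subgroup:
  assumes k: "k \<ge> 1" and H: "subgroup H G" and sub: "A k <#> set_inv (A k) \<subseteq> H"
  shows "card (A k) dvd card H"
proof -
  have i: "k \<in> {1..k}" using k by simp
  obtain g where g: "g \<in> A k" using factor_nonempty[OF i] by blast
  have Ak: "A k \<subseteq> carrier G" by (rule factor_subset[OF i])
  have g_carrier: "g \<in> carrier G" using g Ak by auto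
  have "card (A k) dvd card (H #> g)"
  proof (rule card_factor_dvd_card[OF i])
    show "H #> g \<subseteq> carrier G" using H g_carrier by (simp add: r_coset_subset_G subgroup.subset)
    fix P Q a c assume P: "P \<in> carrier G" and Q: "Q \<in> carrier G" "k = k \<Longrightarrow> Q = \<one>"
      and a: "a \<in> A k" and c: "c \<in> A k" and Pa: "P \<otimes> a \<otimes> Q \<in> H #> g"
    have carrier: "a \<in> carrier G" "c \<in> carrier G" using a c Ak by auto
    have "P \<otimes> a \<otimes> inv g \<in> H"
      using subgroup.rcos_module[OF H is_group g_carrier] Pa P carrier Q by simp
    moreover have "g \<otimes> inv a \<in> H" "c \<otimes> inv g \<in> H"
      using sub g a c unfolding subset_iff mult_set_inv_iff by blast+
    ultimately have "(P \<otimes> a \<otimes> inv g) \<otimes> (g \<otimes> inv a) \<otimes> (c \<otimes> inv g) \<in> H"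
      using H by (simp add: subgroup.m_closed)
    then have "(P \<otimes> c \<otimes> Q) \<otimes> inv g \<in> H" using P carrier Q g_carrier by (simp add: m_assoc)
    then show "P \<otimes> c \<otimes> Q \<in> H #> g"
      using subgroup.rcos_module[OF H is_group g_carrier] P carrier Q by simp
  qed
  then show ?thesis using card_rcosets_equal[OF rcosetsI] subgroup.subset[OF H] g_carrier by simp
qed

lemma card_factor_dvd_normal_subgroup:
  assumes i: "i \<in> {1..k}" and N: "N \<lhd> G" and sub: "set_inv (A i) <#> A i \<subseteq> N"
  shows "card (A i) dvd card N"
proof (rule card_factor_dvd_card[OF i])
  show "N \<subseteq> carrier G" using N by (simp add: normal_imp_subgroup subgroup.subset)
  fix P Q a c assume P: "P \<in> carrier G" and Q: "Q \<in> carrier G"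
    and a: "a \<in> A i" and c: "c \<in> A i" and aN: "P \<otimes> a \<otimes> Q \<in> N"
  have carrier: "a \<in> carrier G" "c \<in> carrier G" using a c factor_subset[OF i] by auto
  have "inv a \<otimes> c \<in> N" using sub a c unfolding subset_iff set_inv_mult_iff by blast
  then have "inv Q \<otimes> (inv a \<otimes> c) \<otimes> Q \<in> N" using normal.inv_op_closed1[OF N Q] by blast
  with aN have "(P \<otimes> a \<otimes> Q) \<otimes> (inv Q \<otimes> (inv a \<otimes> c) \<otimes> Q) \<in> N"
    using N by (simp add: normal_imp_subgroup subgroup.m_closed)
  then show "P \<otimes> c \<otimes> Q \<in> N" using P carrier Q by (simp add: m_assoc)
qed

end

theorem lemma2p1:
  fixes G (structure) and k :: nat and A :: "nat \<Rightarrow> 'a set"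
  assumes "group G" and "finite (carrier G)" and "k \<ge> 1"
    and "\<And>i. i \<in> {1..k} \<Longrightarrow> A i \<subseteq> carrier G"
    and "\<And>i. i \<in> {1..k} \<Longrightarrow> A i \<noteq> {}"
    and "bij_betw (\<lambda>a. prod_seq G a k) (PiE {1..k} A) (carrier G)"
  shows
    "(card (A 1) dvd card (generate G (set_inv (A 1) <#> A 1))
      \<and> (\<forall>g\<in>A 1. generate G (set_inv (A 1) <#> A 1) = generate G (inv g <# A 1))
      \<and> card (generate G (set_inv (A 1) <#> A 1)) = card (generate G (A 1 <#> set_inv (A 1)))
      \<and> (\<forall>g\<in>A 1. generate G (A 1 <#> set_inv (A 1)) = generate G (A 1 #> inv g)))
   \<and> (card (A k) dvd card (generate G (A k <#> set_inv (A k)))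
      \<and> (\<forall>g\<in>A k. generate G (A k <#> set_inv (A k)) = generate G (A k #> inv g))
      \<and> card (generate G (A k <#> set_inv (A k))) = card (generate G (set_inv (A k) <#> A k))
      \<and> (\<forall>g\<in>A k. generate G (set_inv (A k) <#> A k) = generate G (inv g <# A k)))
   \<and> (\<forall>i. 1 < i \<and> i < k \<longrightarrow>
        card (A i) dvd card (normal_closure G (set_inv (A i) <#> A i))
      \<and> (\<forall>g\<in>A i. normal_closure G (set_inv (A i) <#> A i) = normal_closure G (inv g <# A i))
      \<and> normal_closure G (set_inv (A i) <#> A i) = normal_closure G (A i <#> set_inv (A i))
      \<and> (\<forall>g\<in>A i. normal_closure G (set_inv (A i) <#> A i) = normal_closure G (A i #> inv g)))"
proof -
  interpret group_factorization G k A
    using assms(1,4,6) by (intro group_factorization.intro group_factorization_axioms.intro)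
  have ends: "1 \<in> {1..k}" "k \<in> {1..k}" using assms(3) by auto
  have first: "card (A 1) dvd card (generate G (set_inv (A 1) <#> A 1))"
    using factor_subset[OF ends(1)] assms(3)
    by (intro card_first_factor_dvd_subgroup generate_is_subgroup set_mult_closed
        set_inv_subset_carrier) (auto intro: generate.incl)
  have last: "card (A k) dvd card (generate G (A k <#> set_inv (A k)))"
    using factor_subset[OF ends(2)] assms(3)
    by (intro card_last_factor_dvd_subgroup generate_is_subgroup set_mult_closed
        set_inv_subset_carrier) (auto intro: generate.incl)
  have middle: "card (A i) dvd card (normal_closure G (set_inv (A i) <#> A i))"
    if "1 < i \<and> i < k" for i
    using that factor_subset[of i]
    by (intro card_factor_dvd_normal_subgroup normal_closure_normal normal_closure_incl
        set_mult_closed set_inv_subset_carrier) auto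
  show ?thesis
    using first last middle assms(3)
    by (intro conjI ballI allI impI)
      (simp_all add: factor_subset factor_nonempty card_generate_set_inv_mult
        generate_set_inv_mult_eq_l_coset[symmetric] generate_mult_set_inv_eq_r_coset[symmetric]
        normal_closure_set_inv_mult_eq_l_coset[symmetric]
        normal_closure_set_inv_mult_eq_r_coset[symmetric]
        normal_closure_set_inv_mult_eq_mult_set_inv)
qed

end
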